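(* Let $(Z, S(1), S(0), Y(1), Y(0), \mathbf{X})$ be random variables with $Z\in\{0,1\}$, $S(z)\in\{0,1\}$, $Y(z)$ real-valued, $\mathbf{X}$ a covariate vector, observed $S=S(Z)$, and assume Randomization: $Z \perp\!\!\!\perp \{S(1),S(0),Y(1),Y(0),\mathbf{X}\}$. Assume Monotonicity ($S(1)\ge S(0)$ a.s.) and General Principal Ignorability ($Y(z)\perp\!\!\!\perp U\mid \mathbf{X}$ for $z=0,1$). Then $Y(1)\perp\!\!\!\perp U\mid\{Z=1,S=1,e_{1,u}(\mathbf{X})\}$ for $u=s\bar{s}$ and $u=ss$, and $Y(0)\perp\!\!\!\perp U\mid\{Z=0,S=0,e_{0,u}(\mathbf{X})\}$ for $u=s\bar{s}$ and $u=\bar{s}\bar{s}$.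
   Context: The principal stratum is $U=(S(1),S(0))$, whose values $(1,1),(1,0),(0,1),(0,0)$ are labelled $ss, s\bar{s}, \bar{s}s, \bar{s}\bar{s}$. Principal scores: $e_u(\mathbf{X}) = \Pr(U=u\mid \mathbf{X})$. Define $e_{1,s\bar{s}}(\mathbf{X}) = e_{s\bar{s}}(\mathbf{X})/\{e_{s\bar{s}}(\mathbf{X})+e_{ss}(\mathbf{X})\}$, $e_{1,ss}(\mathbf{X}) = e_{ss}(\mathbf{X})/\{e_{s\bar{s}}(\mathbf{X})+e_{ss}(\mathbf{X})\}$, $e_{0,s\bar{s}}(\mathbf{X}) = e_{s\bar{s}}(\mathbf{X})/\{e_{s\bar{s}}(\mathbf{X})+e_{\bar{s}\bar{s}}(\mathbf{X})\}$, $e_{0,\bar{s}\bar{s}}(\mathbf{X}) = e_{\bar{s}\bar{s}}(\mathbf{X})/\{e_{s\bar{s}}(\mathbf{X})+e_{\bar{s}\bar{s}}(\mathbf{X})\}$. Conditioning events and denominators are assumed positive. *)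

theory Defs
  imports "HOL-Probability.Probability"
begin

definition cond_prob_given ::
  "'a measure \<Rightarrow> ('a \<Rightarrow> 'c) \<Rightarrow> 'c measure \<Rightarrow> 'a set \<Rightarrow> 'a \<Rightarrow> real" where
  "cond_prob_given M W MW E =
     real_cond_exp M (vimage_algebra (space M) W MW) (indicator (E \<inter> space M))"

definition cond_indep ::
  "'a measure \<Rightarrow> ('a \<Rightarrow> 'b) \<Rightarrow> 'b measure \<Rightarrow> ('a \<Rightarrow> 'd) \<Rightarrow> 'd measure
     \<Rightarrow> ('a \<Rightarrow> 'c) \<Rightarrow> 'c measure \<Rightarrow> bool" where
  "cond_indep M A MA B MB W MW \<longleftrightarrow>
     (\<forall>a\<in>sets MA. \<forall>b\<in>sets MB. AE \<omega> in M.
        cond_prob_given M W MW (A -` a \<inter> B -` b) \<omega> =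
        cond_prob_given M W MW (A -` a) \<omega> * cond_prob_given M W MW (B -` b) \<omega>)"

text \<open>e is a version of the conditional probability x \<mapsto> Pr(E | X = x).\<close>
definition is_cond_prob_fun ::
  "'a measure \<Rightarrow> ('a \<Rightarrow> 'x) \<Rightarrow> 'x measure \<Rightarrow> 'a set \<Rightarrow> ('x \<Rightarrow> real) \<Rightarrow> bool" where
  "is_cond_prob_fun M X MX E e \<longleftrightarrow>
     e \<in> borel_measurable MX \<and> (AE \<omega> in M. e (X \<omega>) = cond_prob_given M X MX E \<omega>)"

text \<open>Independence of two random variables with possibly different codomains
  (the library's indep_var requires equal codomain types); this is indep_vars_def2
  specialised to two variables.\<close>
definition indep_rv ::
  "'a measure \<Rightarrow> ('a \<Rightarrow> 'b) \<Rightarrow> 'b measure \<Rightarrow> ('a \<Rightarrow> 'c) \<Rightarrow> 'c measure \<Rightarrow> bool" where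
  "indep_rv M A MA B MB \<longleftrightarrow>
     A \<in> measurable M MA \<and> B \<in> measurable M MB \<and>
     prob_space.indep_set M {A -` a \<inter> space M | a. a \<in> sets MA}
                            {B -` b \<inter> space M | b. b \<in> sets MB}"

end

theory Submission
  imports Defs
begin

text \<open>Within the event \<open>{Z = z, U \<in> {u1, u2}}\<close>, the covariates inform about the stratum only
  through the score ratio \<open>r(X) = e1(X) / (e1(X) + e2(X))\<close>. Randomization lets the event
  \<open>Z = z\<close> be factored out of every integral, and principal ignorability turns
  \<open>P(Y \<in> a, U = u | X)\<close> into \<open>P(Y \<in> a | X) e_u(X)\<close>. Integrating against functions of \<open>r(X)\<close>
  then shows that \<open>P(Y \<in> a, U \<in> b | r(X))\<close> factors as \<open>P(Y \<in> a | r(X))\<close> times the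
  \<open>r(X)\<close>-measurable weight \<open>[u1 \<in> b] r(X) + [u2 \<in> b] (1 - r(X))\<close>.\<close>

lemma finite_measure_subalgebra_vimage_algebra:
  assumes "finite_measure M" "T \<in> measurable M MT"
  shows "finite_measure_subalgebra M (vimage_algebra (space M) T MT)"
proof -
  have "subalgebra M (vimage_algebra (space M) T MT)"
    unfolding subalgebra_def using sets_image_in_sets[OF refl assms(2)] by simp
  with assms(1) show ?thesis
    by (intro finite_measure_subalgebra.intro finite_measure_subalgebra_axioms.intro)
       (auto simp: finite_measure_def)
qed

lemma in_vimage_algebraE:
  assumes "A \<in> sets (vimage_algebra (space M) T MT)" "T \<in> measurable M MT"
  obtains c where "c \<in> sets MT" "A = T -` c \<inter> space M"
  using assms sets_vimage_algebra2[of T "space M" MT] by (auto simp: measurable_def)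

lemma (in prob_space) integrable_indicator_event [simp]:
  "A \<in> events \<Longrightarrow> integrable M (indicator A :: 'a \<Rightarrow> real)"
  by (simp add: less_top[symmetric])

lemma cond_prob_given_Int_space [simp]:
  "cond_prob_given M W MW (E \<inter> space M) = cond_prob_given M W MW E"
  by (simp add: cond_prob_given_def Int_assoc)

lemma borel_measurable_cond_prob_given [measurable]:
  "cond_prob_given M W MW E \<in> borel_measurable M"
  unfolding cond_prob_given_def by (rule borel_measurable_cond_exp2)

lemma cond_prob_given_range:
  assumes "prob_space M" "W \<in> measurable M MW" "E \<inter> space M \<in> sets M"
  shows "AE \<omega> in M. 0 \<le> cond_prob_given M W MW E \<omega> \<and> cond_prob_given M W MW E \<omega> \<le> 1"
proof -
  interpret prob_space M by fact
  interpret finite_measure_subalgebra M "vimage_algebra (space M) W MW"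
    using assms(2) by (rule finite_measure_subalgebra_vimage_algebra[OF finite_measure_axioms])
  have "AE \<omega> in M. 0 \<le> cond_prob_given M W MW E \<omega>" "AE \<omega> in M. cond_prob_given M W MW E \<omega> \<le> 1"
    unfolding cond_prob_given_def using assms(3)
    by (auto intro!: real_cond_exp_ge_c real_cond_exp_le_c split: split_indicator)
  then show ?thesis by auto
qed

lemma is_cond_prob_fun_nonneg:
  assumes "prob_space M" "X \<in> measurable M MX" "E \<inter> space M \<in> sets M" "is_cond_prob_fun M X MX E e"
  shows "AE \<omega> in M. 0 \<le> e (X \<omega>)"
  using cond_prob_given_range[OF assms(1-3)] assms(4)
  unfolding is_cond_prob_fun_def by auto

lemma indep_rv_comp:
  assumes P: "prob_space M" and indep: "indep_rv M A MA B MB" and f: "f \<in> measurable MB MC"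
  shows "indep_rv M A MA (\<lambda>\<omega>. f (B \<omega>)) MC"
proof -
  have B: "B \<in> measurable M MB"
    and AB: "prob_space.indep_set M {A -` a \<inter> space M | a. a \<in> sets MA} {B -` b \<inter> space M | b. b \<in> sets MB}"
    using indep by (auto simp: indep_rv_def)
  interpret prob_space M by fact
  have fB: "(\<lambda>\<omega>. f (B \<omega>)) -` c \<inter> space M \<in> {B -` b \<inter> space M | b. b \<in> sets MB}" if "c \<in> sets MC" for c
    using measurable_space[OF B] measurable_sets[OF f that]
    by (intro CollectI exI[of _ "f -` c \<inter> space MB"]) auto
  show ?thesis
    unfolding indep_rv_def
  proof (intro conjI indep_setI)
    show "(\<lambda>\<omega>. f (B \<omega>)) \<in> measurable M MC" using B f by measurable
    show "{A -` a \<inter> space M | a. a \<in> sets MA} \<subseteq> events" using indep_setD_ev1[OF AB] .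
    show "{(\<lambda>\<omega>. f (B \<omega>)) -` c \<inter> space M | c. c \<in> sets MC} \<subseteq> events"
      using fB indep_setD_ev2[OF AB] by blast
  qed (use indep fB in \<open>auto simp: indep_rv_def intro!: indep_setD[OF AB]\<close>)
qed

lemma indep_rv_prob_Int:
  assumes "prob_space M" "indep_rv M A MA B MB" "a \<in> sets MA" "b \<in> sets MB"
  shows "measure M (A -` a \<inter> space M \<inter> (B -` b \<inter> space M))
    = measure M (A -` a \<inter> space M) * measure M (B -` b \<inter> space M)"
  using assms(2-) prob_space.indep_setD[OF assms(1)] unfolding indep_rv_def by blast

lemma integral_uniform_measure:
  fixes f :: "'a \<Rightarrow> real"
  assumes "prob_space M" and [measurable]: "A \<in> sets M" "f \<in> borel_measurable M"
    and "measure M A > 0"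
  shows "integral\<^sup>L (uniform_measure M A) f = (\<integral>\<omega>. indicator A \<omega> * f \<omega> \<partial>M) / measure M A"
proof -
  interpret prob_space M by fact
  have "1 / ennreal (measure M A) = ennreal (1 / measure M A)"
    using divide_ennreal[of 1 "measure M A"] assms(4) by simp
  then have "uniform_measure M A = density M (\<lambda>\<omega>. ennreal (indicator A \<omega> / measure M A))"
    unfolding uniform_measure_def using assms(4)
    by (intro density_cong) (auto simp: emeasure_eq_measure divide_ennreal split: split_indicator)
  then have "integral\<^sup>L (uniform_measure M A) f = (\<integral>\<omega>. indicator A \<omega> * f \<omega> / measure M A \<partial>M)"
    by (simp add: integral_density)
  then show ?thesis by simp
qed

lemma cond_prob_given_indep_Int:
  assumes P: "prob_space M" and [measurable]: "X \<in> measurable M MX" "Z \<in> sets M" "F \<in> sets M"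
    and indep: "\<And>g. g \<in> sets MX \<Longrightarrow>
      measure M (Z \<inter> (F \<inter> X -` g \<inter> space M)) = measure M Z * measure M (F \<inter> X -` g \<inter> space M)"
  shows "AE \<omega> in M. cond_prob_given M X MX (Z \<inter> F) \<omega> = measure M Z * cond_prob_given M X MX F \<omega>"
proof -
  interpret prob_space M by fact
  define G where "G = vimage_algebra (space M) X MX"
  interpret G: finite_measure_subalgebra M G
    unfolding G_def by (rule finite_measure_subalgebra_vimage_algebra[OF finite_measure_axioms]) measurable
  have [simp]: "Z \<inter> F \<inter> space M = Z \<inter> F" "F \<inter> space M = F"
    using sets.sets_into_space[of Z M] sets.sets_into_space[of F M] by auto
  have "AE \<omega> in M. real_cond_exp M G (indicator (Z \<inter> F)) \<omega> = prob Z * real_cond_exp M G (indicator F) \<omega>"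
  proof (rule G.real_cond_exp_charact)
    fix A assume "A \<in> sets G"
    then obtain g where [measurable]: "g \<in> sets MX" and A: "A = X -` g \<inter> space M"
      unfolding G_def by (rule in_vimage_algebraE) measurable
    have [measurable]: "A \<in> sets G" "A \<in> events" using \<open>A \<in> sets G\<close> by (simp_all add: A)
    have "(\<integral>\<omega>\<in>A. indicator (Z \<inter> F) \<omega> \<partial>M) = prob (Z \<inter> (F \<inter> X -` g \<inter> space M))"
      by (simp add: A set_lebesgue_integral_def indicator_inter_arith[symmetric] Int_ac)
    also have "\<dots> = prob Z * prob (F \<inter> X -` g \<inter> space M)"
      by (rule indep) fact
    also have "prob (F \<inter> X -` g \<inter> space M) = (\<integral>\<omega>\<in>A. indicator F \<omega> \<partial>M)"
      by (simp add: A set_lebesgue_integral_def indicator_inter_arith[symmetric] Int_ac)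
    also have "(\<integral>\<omega>\<in>A. indicator F \<omega> \<partial>M) = (\<integral>\<omega>\<in>A. real_cond_exp M G (indicator F) \<omega> \<partial>M)"
      by (rule G.real_cond_exp_intA) (simp_all add: \<open>A \<in> sets G\<close>)
    finally show "(\<integral>\<omega>\<in>A. indicator (Z \<inter> F) \<omega> \<partial>M)
        = (\<integral>\<omega>\<in>A. prob Z * real_cond_exp M G (indicator F) \<omega> \<partial>M)"
      by (simp add: set_lebesgue_integral_def)
  qed (auto intro: borel_measurable_cond_exp)
  then show ?thesis by (simp add: cond_prob_given_def G_def)
qed

lemma cond_indep_if_factorised:
  fixes Y :: "'a \<Rightarrow> 'y" and U :: "'a \<Rightarrow> 'u" and T :: "'a \<Rightarrow> 't" and H :: "'u set \<Rightarrow> 'a \<Rightarrow> real"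
  assumes N: "prob_space N"
    and [measurable]: "Y \<in> measurable N MY" "U \<in> measurable N MU" "T \<in> measurable N MT"
    and H_measurable: "\<And>b. b \<in> sets MU \<Longrightarrow> H b \<in> borel_measurable (vimage_algebra (space N) T MT)"
    and H_bounded: "\<And>b. b \<in> sets MU \<Longrightarrow> AE \<omega> in N. \<bar>H b \<omega>\<bar> \<le> 1"
    and factorised: "\<And>a b c. a \<in> sets MY \<Longrightarrow> b \<in> sets MU \<Longrightarrow> c \<in> sets MT \<Longrightarrow>
      (\<integral>\<omega>\<in>T -` c \<inter> space N. indicator (Y -` a \<inter> U -` b \<inter> space N) \<omega> \<partial>N)
      = (\<integral>\<omega>\<in>T -` c \<inter> space N. H b \<omega> * indicator (Y -` a \<inter> space N) \<omega> \<partial>N)"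
  shows "cond_indep N Y MY U MU T MT"
  unfolding cond_indep_def
proof (intro ballI)
  interpret prob_space N by fact
  define G where "G = vimage_algebra (space N) T MT"
  interpret G: finite_measure_subalgebra N G
    unfolding G_def by (rule finite_measure_subalgebra_vimage_algebra[OF finite_measure_axioms]) measurable
  fix a b assume [measurable]: "a \<in> sets MY" and b[measurable]: "b \<in> sets MU"
  define CA where "CA = cond_prob_given N T MT (Y -` a)"
  have [measurable]: "H b \<in> borel_measurable G" unfolding G_def by (rule H_measurable) fact
  then have [measurable]: "H b \<in> borel_measurable N" by (rule measurable_from_subalg[OF G.subalg])
  have [measurable]: "CA \<in> borel_measurable G" "CA \<in> borel_measurable N"
    unfolding CA_def cond_prob_given_def G_def
    by (rule borel_measurable_cond_exp borel_measurable_cond_exp2)+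
  have [measurable]: "Y -` a \<inter> U -` b \<inter> space N \<in> events"
  proof -
    have "Y -` a \<inter> U -` b \<inter> space N = (Y -` a \<inter> space N) \<inter> (U -` b \<inter> space N)" by auto
    then show ?thesis by simp
  qed
  have CA_range: "AE \<omega> in N. \<bar>CA \<omega>\<bar> \<le> 1"
    using cond_prob_given_range[OF N, of T MT "Y -` a"] unfolding CA_def by auto
  have "AE \<omega> in N. cond_prob_given N T MT (U -` b) \<omega> = H b \<omega>"
    unfolding cond_prob_given_def G_def[symmetric]
  proof (rule G.real_cond_exp_charact)
    fix A assume "A \<in> sets G"
    then obtain c where [measurable]: "c \<in> sets MT" and A: "A = T -` c \<inter> space N"
      unfolding G_def by (rule in_vimage_algebraE) simp
    have Y_space: "Y -` space MY \<inter> space N = space N"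
      and U_eq: "Y -` space MY \<inter> U -` b \<inter> space N = U -` b \<inter> space N"
      using measurable_space[of Y N MY] by auto
    have "(\<integral>\<omega>\<in>A. indicator (U -` b \<inter> space N) \<omega> \<partial>N)
        = (\<integral>\<omega>\<in>A. H b \<omega> * indicator (space N) \<omega> \<partial>N)"
      using factorised[of "space MY" b c] unfolding A Y_space U_eq by simp
    also have "\<dots> = (\<integral>\<omega>\<in>A. H b \<omega> \<partial>N)"
      by (rule set_lebesgue_integral_cong) (auto simp: A)
    finally show "(\<integral>\<omega>\<in>A. indicator (U -` b \<inter> space N) \<omega> \<partial>N) = (\<integral>\<omega>\<in>A. H b \<omega> \<partial>N)" .
  qed (auto intro!: integrable_const_bound[where B=1] H_bounded)
  moreover have "AE \<omega> in N. cond_prob_given N T MT (Y -` a \<inter> U -` b) \<omega> = H b \<omega> * CA \<omega>"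
    unfolding cond_prob_given_def G_def[symmetric]
  proof (rule G.real_cond_exp_charact)
    fix A assume "A \<in> sets G"
    then obtain c where [measurable]: "c \<in> sets MT" and A: "A = T -` c \<inter> space N"
      unfolding G_def by (rule in_vimage_algebraE) simp
    have [measurable]: "A \<in> sets G" "A \<in> sets N" using \<open>A \<in> sets G\<close> by (simp_all add: A)
    have "(\<integral>\<omega>\<in>A. indicator (Y -` a \<inter> U -` b \<inter> space N) \<omega> \<partial>N)
        = (\<integral>\<omega>. (indicator A \<omega> * H b \<omega>) * indicator (Y -` a \<inter> space N) \<omega> \<partial>N)"
      using factorised[of a b c] by (simp add: A set_lebesgue_integral_def mult.assoc)
    also have "\<dots> = (\<integral>\<omega>. (indicator A \<omega> * H b \<omega>) * CA \<omega> \<partial>N)"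
      unfolding CA_def cond_prob_given_def G_def[symmetric]
      using H_bounded[OF b]
      by (intro G.real_cond_exp_intg(2)[symmetric] integrable_const_bound[where B=1])
         (auto split: split_indicator)
    also have "\<dots> = (\<integral>\<omega>\<in>A. H b \<omega> * CA \<omega> \<partial>N)"
      by (simp add: set_lebesgue_integral_def mult.assoc)
    finally show "(\<integral>\<omega>\<in>A. indicator (Y -` a \<inter> U -` b \<inter> space N) \<omega> \<partial>N)
        = (\<integral>\<omega>\<in>A. H b \<omega> * CA \<omega> \<partial>N)" .
  next
    show "integrable N (\<lambda>\<omega>. H b \<omega> * CA \<omega>)"
    proof (rule integrable_const_bound[where B=1])
      show "AE \<omega> in N. norm (H b \<omega> * CA \<omega>) \<le> 1"
        using H_bounded[OF b] CA_range by eventually_elim (simp add: abs_mult mult_le_one)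
    qed measurable
  qed auto
  ultimately show "AE \<omega> in N. cond_prob_given N T MT (Y -` a \<inter> U -` b) \<omega>
      = cond_prob_given N T MT (Y -` a) \<omega> * cond_prob_given N T MT (U -` b) \<omega>"
    unfolding CA_def by auto
qed

locale strata_pair = prob_space M for M :: "'a measure" +
  fixes MX :: "'x measure" and MY :: "'y measure"
    and X :: "'a \<Rightarrow> 'x" and Y :: "'a \<Rightarrow> 'y" and U :: "'a \<Rightarrow> 'u"
    and u1 u2 :: 'u and e1 e2 :: "'x \<Rightarrow> real"
  assumes X_measurable [measurable]: "X \<in> measurable M MX"
    and Y_measurable [measurable]: "Y \<in> measurable M MY"
    and U_measurable [measurable]: "U \<in> measurable M (count_space UNIV)"
    and strata_distinct: "u1 \<noteq> u2"
    and ignorability: "cond_indep M Y MY U (count_space UNIV) X MX"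
    and score1: "is_cond_prob_fun M X MX (U -` {u1}) e1"
    and score2: "is_cond_prob_fun M X MX (U -` {u2}) e2"
    and scores_pos: "\<forall>x\<in>space MX. 0 < e1 x + e2 x"
begin

lemma events_Y_U [measurable]:
  assumes "a \<in> sets MY"
  shows "Y -` a \<inter> U -` b \<inter> space M \<in> events"
proof -
  have "Y -` a \<inter> U -` b \<inter> space M = (Y -` a \<inter> space M) \<inter> (U -` b \<inter> space M)" by auto
  with assms show ?thesis by simp
qed

lemma scores_measurable [measurable]: "e1 \<in> borel_measurable MX" "e2 \<in> borel_measurable MX"
  using score1 score2 by (simp_all add: is_cond_prob_fun_def)

lemma scores_nonneg: "AE \<omega> in M. 0 \<le> e1 (X \<omega>) \<and> 0 \<le> e2 (X \<omega>)"
  using is_cond_prob_fun_nonneg[OF prob_space_axioms X_measurable _ score1]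
    is_cond_prob_fun_nonneg[OF prob_space_axioms X_measurable _ score2]
  by auto

definition stratum_weight :: "'u set \<Rightarrow> 'x \<Rightarrow> real" where
  "stratum_weight B x = of_bool (u1 \<in> B) * e1 x + of_bool (u2 \<in> B) * e2 x"

lemma cond_prob_given_strata:
  assumes "B \<subseteq> {u1, u2}"
  shows "AE \<omega> in M. cond_prob_given M X MX (U -` B) \<omega> = stratum_weight B (X \<omega>)"
proof -
  define G where "G = vimage_algebra (space M) X MX"
  interpret G: finite_measure_subalgebra M G
    unfolding G_def by (rule finite_measure_subalgebra_vimage_algebra[OF finite_measure_axioms]) measurable
  define I :: "'u \<Rightarrow> 'a \<Rightarrow> real" where "I u = indicator (U -` {u} \<inter> space M)" for u
  have [simp]: "integrable M (I u)" "integrable M (\<lambda>\<omega>. c * I u \<omega>)" for u c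
    unfolding I_def by (simp_all add: measurable_sets[OF U_measurable])
  have "indicator (U -` B \<inter> space M) = (\<lambda>\<omega>. of_bool (u1 \<in> B) * I u1 \<omega> + of_bool (u2 \<in> B) * I u2 \<omega>)"
    using assms strata_distinct by (auto simp: I_def fun_eq_iff split: split_indicator)
  moreover have "AE \<omega> in M. real_cond_exp M G (\<lambda>\<omega>. of_bool (u1 \<in> B) * I u1 \<omega> + of_bool (u2 \<in> B) * I u2 \<omega>) \<omega>
      = real_cond_exp M G (\<lambda>\<omega>. of_bool (u1 \<in> B) * I u1 \<omega>) \<omega>
        + real_cond_exp M G (\<lambda>\<omega>. of_bool (u2 \<in> B) * I u2 \<omega>) \<omega>"
    by (rule G.real_cond_exp_add) simp_all
  moreover have "AE \<omega> in M. real_cond_exp M G (\<lambda>\<omega>. c * I u \<omega>) \<omega> = c * real_cond_exp M G (I u) \<omega>" for c u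
    by (rule G.real_cond_exp_cmult) simp
  moreover have "AE \<omega> in M. e1 (X \<omega>) = real_cond_exp M G (I u1) \<omega>" "AE \<omega> in M. e2 (X \<omega>) = real_cond_exp M G (I u2) \<omega>"
    using score1 score2 by (simp_all add: is_cond_prob_fun_def cond_prob_given_def G_def I_def)
  ultimately show ?thesis
    by (auto simp: cond_prob_given_def G_def[symmetric] stratum_weight_def)
qed

lemma integral_indep_stratum:
  fixes \<psi> :: "'x \<Rightarrow> real"
  assumes indep: "indep_rv M Z MZ (\<lambda>\<omega>. (Y \<omega>, U \<omega>, X \<omega>)) (MY \<Otimes>\<^sub>M count_space UNIV \<Otimes>\<^sub>M MX)"
    and z: "z \<in> sets MZ" and a [measurable]: "a \<in> sets MY" and B: "B \<subseteq> {u1, u2}"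
    and \<psi> [measurable]: "\<psi> \<in> borel_measurable MX" and \<psi>_bounded: "AE \<omega> in M. \<bar>\<psi> (X \<omega>)\<bar> \<le> C"
  shows "(\<integral>\<omega>. \<psi> (X \<omega>) * indicator (Z -` z \<inter> Y -` a \<inter> U -` B \<inter> space M) \<omega> \<partial>M)
    = prob (Z -` z \<inter> space M)
      * (\<integral>\<omega>. \<psi> (X \<omega>) * cond_prob_given M X MX (Y -` a) \<omega> * stratum_weight B (X \<omega>) \<partial>M)"
proof -
  define G where "G = vimage_algebra (space M) X MX"
  interpret G: finite_measure_subalgebra M G
    unfolding G_def by (rule finite_measure_subalgebra_vimage_algebra[OF finite_measure_axioms]) measurable
  define Zs where "Zs = Z -` z \<inter> space M"
  define F where "F = Y -` a \<inter> U -` B \<inter> space M"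
  have "Z \<in> measurable M MZ" using indep by (simp add: indep_rv_def)
  then have [measurable]: "Zs \<in> events" using z unfolding Zs_def by measurable
  have [measurable]: "F \<in> events" unfolding F_def by measurable
  have ZF: "Z -` z \<inter> Y -` a \<inter> U -` B \<inter> space M = Zs \<inter> F" by (auto simp: Zs_def F_def)
  have F_X: "F \<inter> X -` g \<inter> space M = (\<lambda>\<omega>. (Y \<omega>, U \<omega>, X \<omega>)) -` (a \<times> B \<times> g) \<inter> space M" for g
    by (auto simp: F_def)
  have "AE \<omega> in M. cond_prob_given M X MX (Zs \<inter> F) \<omega> = prob Zs * cond_prob_given M X MX F \<omega>"
    using indep_rv_prob_Int[OF prob_space_axioms indep z]
    by (intro cond_prob_given_indep_Int[OF prob_space_axioms X_measurable \<open>Zs \<in> events\<close> \<open>F \<in> events\<close>])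
       (simp add: Zs_def F_X)
  moreover have "AE \<omega> in M. cond_prob_given M X MX F \<omega>
      = cond_prob_given M X MX (Y -` a) \<omega> * cond_prob_given M X MX (U -` B) \<omega>"
    using ignorability a unfolding cond_indep_def F_def by simp
  moreover note cond_prob_given_strata[OF B]
  ultimately have "AE \<omega> in M. \<psi> (X \<omega>) * cond_prob_given M X MX (Zs \<inter> F) \<omega>
      = prob Zs * (\<psi> (X \<omega>) * cond_prob_given M X MX (Y -` a) \<omega> * stratum_weight B (X \<omega>))"
    by eventually_elim simp
  then have "(\<integral>\<omega>. \<psi> (X \<omega>) * cond_prob_given M X MX (Zs \<inter> F) \<omega> \<partial>M)
      = (\<integral>\<omega>. prob Zs * (\<psi> (X \<omega>) * cond_prob_given M X MX (Y -` a) \<omega> * stratum_weight B (X \<omega>)) \<partial>M)"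
    by (intro integral_cong_AE) (simp_all add: stratum_weight_def)
  moreover have "(\<integral>\<omega>. \<psi> (X \<omega>) * indicator (Zs \<inter> F) \<omega> \<partial>M)
      = (\<integral>\<omega>. \<psi> (X \<omega>) * cond_prob_given M X MX (Zs \<inter> F) \<omega> \<partial>M)"
    unfolding cond_prob_given_def G_def[symmetric] Int_absorb2[OF sets.sets_into_space[OF \<open>F \<in> events\<close>]] Int_assoc
  proof (rule G.real_cond_exp_intg(2)[symmetric])
    show "integrable M (\<lambda>\<omega>. \<psi> (X \<omega>) * indicator (Zs \<inter> F) \<omega>)"
    proof (rule integrable_const_bound[where B=C])
      show "AE \<omega> in M. norm (\<psi> (X \<omega>) * indicator (Zs \<inter> F) \<omega>) \<le> C"
        using \<psi>_bounded by eventually_elim (auto split: split_indicator)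
    qed measurable
    show "(\<lambda>\<omega>. \<psi> (X \<omega>)) \<in> borel_measurable G"
      unfolding G_def by (intro measurable_compose[OF measurable_vimage_algebra1 \<psi>]) (use X_measurable in \<open>auto simp: measurable_def\<close>)
  qed simp
  ultimately show ?thesis by (simp add: ZF Zs_def)
qed

definition score_ratio :: "'x \<Rightarrow> real" where
  "score_ratio x = e1 x / (e1 x + e2 x)"

definition stratum_prob_given_ratio :: "'u set \<Rightarrow> real \<Rightarrow> real" where
  "stratum_prob_given_ratio b t = of_bool (u1 \<in> b) * t + of_bool (u2 \<in> b) * (1 - t)"

lemma stratum_weight_eq_ratio:
  assumes "x \<in> space MX"
  shows "stratum_weight (b \<inter> {u1, u2}) x
    = stratum_prob_given_ratio b (score_ratio x) * stratum_weight {u1, u2} x"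
  using scores_pos assms
  by (auto simp: stratum_weight_def stratum_prob_given_ratio_def score_ratio_def field_simps)

lemma score_ratio_range: "AE \<omega> in M. 0 \<le> score_ratio (X \<omega>) \<and> score_ratio (X \<omega>) \<le> 1"
  using AE_space scores_nonneg
proof eventually_elim
  case (elim \<omega>)
  then have "0 < e1 (X \<omega>) + e2 (X \<omega>)"
    using scores_pos measurable_space[OF X_measurable] by blast
  with elim show ?case by (simp add: score_ratio_def)
qed

lemma integral_stratum_eq_ratio:
  assumes indep: "indep_rv M Z MZ (\<lambda>\<omega>. (Y \<omega>, U \<omega>, X \<omega>)) (MY \<Otimes>\<^sub>M count_space UNIV \<Otimes>\<^sub>M MX)"
    and z: "z \<in> sets MZ" and [measurable]: "a \<in> sets MY" "g \<in> sets MX"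
  shows "(\<integral>\<omega>. indicator g (X \<omega>) * indicator (Z -` z \<inter> Y -` a \<inter> U -` (b \<inter> {u1, u2}) \<inter> space M) \<omega> \<partial>M)
    = (\<integral>\<omega>. indicator g (X \<omega>) * stratum_prob_given_ratio b (score_ratio (X \<omega>))
          * indicator (Z -` z \<inter> Y -` a \<inter> U -` {u1, u2} \<inter> space M) \<omega> \<partial>M)"
proof -
  define \<psi> where "\<psi> x = indicator g x * stratum_prob_given_ratio b (score_ratio x)" for x
  have [measurable]: "\<psi> \<in> borel_measurable MX"
    unfolding \<psi>_def stratum_prob_given_ratio_def score_ratio_def by measurable
  have \<psi>_bounded: "AE \<omega> in M. \<bar>\<psi> (X \<omega>)\<bar> \<le> 1"
    by (rule eventually_mono[OF score_ratio_range])
       (auto simp: \<psi>_def stratum_prob_given_ratio_def split: split_indicator)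
  let ?P = "cond_prob_given M X MX (Y -` a)"
  have "(\<integral>\<omega>. indicator g (X \<omega>) * indicator (Z -` z \<inter> Y -` a \<inter> U -` (b \<inter> {u1, u2}) \<inter> space M) \<omega> \<partial>M)
      = prob (Z -` z \<inter> space M)
        * (\<integral>\<omega>. indicator g (X \<omega>) * ?P \<omega> * stratum_weight (b \<inter> {u1, u2}) (X \<omega>) \<partial>M)"
    by (rule integral_indep_stratum[OF indep z, where C=1]) auto
  also have "\<dots> = prob (Z -` z \<inter> space M) * (\<integral>\<omega>. \<psi> (X \<omega>) * ?P \<omega> * stratum_weight {u1, u2} (X \<omega>) \<partial>M)"
    by (intro arg_cong[where f="\<lambda>x. _ * x"] Bochner_Integration.integral_cong)
       (simp_all add: \<psi>_def stratum_weight_eq_ratio measurable_space[OF X_measurable])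
  also have "\<dots> = (\<integral>\<omega>. \<psi> (X \<omega>) * indicator (Z -` z \<inter> Y -` a \<inter> U -` {u1, u2} \<inter> space M) \<omega> \<partial>M)"
    by (rule integral_indep_stratum[OF indep z _ _ _ \<psi>_bounded, symmetric]) auto
  finally show ?thesis by (simp add: \<psi>_def)
qed

theorem cond_indep_given_score_ratio:
  assumes indep: "indep_rv M Z MZ (\<lambda>\<omega>. (Y \<omega>, U \<omega>, X \<omega>)) (MY \<Otimes>\<^sub>M count_space UNIV \<Otimes>\<^sub>M MX)"
    and z: "z \<in> sets MZ" and E: "E = Z -` z \<inter> U -` {u1, u2} \<inter> space M" and E_pos: "0 < prob E"
  shows "cond_indep (uniform_measure M E) Y MY U (count_space UNIV)
    (\<lambda>\<omega>. e1 (X \<omega>) / (e1 (X \<omega>) + e2 (X \<omega>))) borel"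
proof -
  define N where "N = uniform_measure M E"
  define T where "T \<omega> = score_ratio (X \<omega>)" for \<omega>
  define H where "H b \<omega> = stratum_prob_given_ratio b (T \<omega>)" for b \<omega>
  have "Z \<in> measurable M MZ" using indep by (simp add: indep_rv_def)
  then have "Z -` z \<inter> space M \<in> events" using z by measurable
  moreover have "E = (Z -` z \<inter> space M) \<inter> (U -` {u1, u2} \<inter> space M)" by (auto simp: E)
  ultimately have [measurable]: "E \<in> events" by simp
  have [measurable]: "score_ratio \<in> borel_measurable MX"
    unfolding score_ratio_def by measurable
  then have [measurable]: "T \<in> borel_measurable M" unfolding T_def[abs_def] by measurable
  then have [measurable]: "H b \<in> borel_measurable M" for b
    unfolding H_def[abs_def] stratum_prob_given_ratio_def by measurable
  have space_N [simp]: "space N = space M" by (simp add: N_def)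
  have "prob_space N"
    unfolding N_def using E_pos by (intro prob_space_uniform_measure) (auto simp: emeasure_eq_measure)
  have integral_N: "integral\<^sup>L N f = (\<integral>\<omega>. indicator E \<omega> * f \<omega> \<partial>M) / prob E"
    if "f \<in> borel_measurable M" for f :: "'a \<Rightarrow> real"
    unfolding N_def using that E_pos by (intro integral_uniform_measure) (auto intro: prob_space_axioms)
  have H_bounded: "AE \<omega> in N. \<bar>H b \<omega>\<bar> \<le> 1" for b
    unfolding N_def
    by (intro AE_uniform_measureI[OF \<open>E \<in> events\<close>] eventually_mono[OF score_ratio_range])
       (auto simp: H_def T_def stratum_prob_given_ratio_def)
  show ?thesis
    unfolding N_def[symmetric] score_ratio_def[symmetric] T_def[symmetric]
  proof (rule cond_indep_if_factorised[where H=H, OF \<open>prob_space N\<close>])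
    show "Y \<in> measurable N MY" "U \<in> measurable N (count_space UNIV)" "T \<in> borel_measurable N"
      by (simp_all add: N_def uniform_measure_def)
    show "H b \<in> borel_measurable (vimage_algebra (space N) T borel)" for b
      unfolding H_def stratum_prob_given_ratio_def
      using measurable_vimage_algebra1[of T "space N" borel] by measurable
    show "AE \<omega> in N. \<bar>H b \<omega>\<bar> \<le> 1" for b by (rule H_bounded)
  next
    fix a b and c :: "real set" assume [measurable]: "a \<in> sets MY" "c \<in> sets borel"
    define g where "g = score_ratio -` c \<inter> space MX"
    have [measurable]: "g \<in> sets MX" unfolding g_def by measurable
    show "(\<integral>\<omega>\<in>T -` c \<inter> space N. indicator (Y -` a \<inter> U -` b \<inter> space N) \<omega> \<partial>N)
      = (\<integral>\<omega>\<in>T -` c \<inter> space N. H b \<omega> * indicator (Y -` a \<inter> space N) \<omega> \<partial>N)"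
    proof -
      have indicator_T: "indicator (T -` c \<inter> space M) \<omega> = indicator g (X \<omega>)" if "\<omega> \<in> space M" for \<omega>
        using that measurable_space[OF X_measurable that] by (auto simp: T_def g_def split: split_indicator)
      have "(\<integral>\<omega>\<in>T -` c \<inter> space N. indicator (Y -` a \<inter> U -` b \<inter> space N) \<omega> \<partial>N) * prob E
          = (\<integral>\<omega>. indicator E \<omega>
              * (indicator (T -` c \<inter> space M) \<omega> * indicator (Y -` a \<inter> U -` b \<inter> space M) \<omega>) \<partial>M)"
        using E_pos by (simp add: set_lebesgue_integral_def integral_N)
      also have "\<dots> = (\<integral>\<omega>. indicator g (X \<omega>) * indicator (Z -` z \<inter> Y -` a \<inter> U -` (b \<inter> {u1, u2}) \<inter> space M) \<omega> \<partial>M)"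
        by (rule Bochner_Integration.integral_cong) (auto simp: E indicator_T split: split_indicator)
      also have "\<dots> = (\<integral>\<omega>. indicator g (X \<omega>) * stratum_prob_given_ratio b (score_ratio (X \<omega>))
          * indicator (Z -` z \<inter> Y -` a \<inter> U -` {u1, u2} \<inter> space M) \<omega> \<partial>M)"
        by (rule integral_stratum_eq_ratio[OF indep z]) measurable
      also have "\<dots> = (\<integral>\<omega>. indicator E \<omega>
          * (indicator (T -` c \<inter> space M) \<omega> * (H b \<omega> * indicator (Y -` a \<inter> space M) \<omega>)) \<partial>M)"
        by (rule Bochner_Integration.integral_cong) (auto simp: E indicator_T H_def T_def split: split_indicator)
      also have "\<dots> = (\<integral>\<omega>\<in>T -` c \<inter> space N. H b \<omega> * indicator (Y -` a \<inter> space N) \<omega> \<partial>N) * prob E"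
        using E_pos by (simp add: set_lebesgue_integral_def integral_N)
      finally show ?thesis using E_pos by simp
    qed
  qed
qed

end

lemma count_space_bool_pair:
  "count_space UNIV \<Otimes>\<^sub>M count_space UNIV = (count_space UNIV :: (bool \<times> bool) measure)"
  by (simp add: pair_measure_countable)

lemma indep_rv_outcome_stratum_covariates:
  fixes S1 S0 :: "'a \<Rightarrow> bool" and Y1 Y0 :: "'a \<Rightarrow> real" and X :: "'a \<Rightarrow> 'x"
  assumes P: "prob_space M" and randomization: "indep_rv M Z MZ (\<lambda>\<omega>. (S1 \<omega>, S0 \<omega>, Y1 \<omega>, Y0 \<omega>, X \<omega>))
      (count_space UNIV \<Otimes>\<^sub>M count_space UNIV \<Otimes>\<^sub>M borel \<Otimes>\<^sub>M borel \<Otimes>\<^sub>M MX)"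
  shows "indep_rv M Z MZ (\<lambda>\<omega>. (Y1 \<omega>, (S1 \<omega>, S0 \<omega>), X \<omega>)) (borel \<Otimes>\<^sub>M count_space UNIV \<Otimes>\<^sub>M MX)"
    and "indep_rv M Z MZ (\<lambda>\<omega>. (Y0 \<omega>, (S1 \<omega>, S0 \<omega>), X \<omega>)) (borel \<Otimes>\<^sub>M count_space UNIV \<Otimes>\<^sub>M MX)"
  using indep_rv_comp[OF P randomization, of "\<lambda>(s1, s0, y1, y0, x). (y1, (s1, s0), x)"]
    indep_rv_comp[OF P randomization, of "\<lambda>(s1, s0, y1, y0, x). (y0, (s1, s0), x)"]
  unfolding count_space_bool_pair[symmetric] by (simp_all add: split_beta')

theorem lemmaA8:
  fixes M :: "'a measure" and MX :: "'x measure"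
    and Z S1 S0 :: "'a \<Rightarrow> bool" and Y1 Y0 :: "'a \<Rightarrow> real" and X :: "'a \<Rightarrow> 'x"
    and e_ss e_ssbar e_sbars e_sbarsbar :: "'x \<Rightarrow> real"
  assumes P: "prob_space M"
    and Z_meas: "Z \<in> measurable M (count_space UNIV)"
    and S1_meas: "S1 \<in> measurable M (count_space UNIV)"
    and S0_meas: "S0 \<in> measurable M (count_space UNIV)"
    and Y1_meas: "Y1 \<in> borel_measurable M"
    and Y0_meas: "Y0 \<in> borel_measurable M"
    and X_meas: "X \<in> measurable M MX"
    and randomization: "indep_rv M Z (count_space UNIV)
          (\<lambda>\<omega>. (S1 \<omega>, S0 \<omega>, Y1 \<omega>, Y0 \<omega>, X \<omega>))
          (count_space UNIV \<Otimes>\<^sub>M count_space UNIV \<Otimes>\<^sub>M borel \<Otimes>\<^sub>M borel \<Otimes>\<^sub>M MX)"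
    and monotonicity: "AE \<omega> in M. S0 \<omega> \<longrightarrow> S1 \<omega>"
    and PI1: "cond_indep M Y1 borel (\<lambda>\<omega>. (S1 \<omega>, S0 \<omega>)) (count_space UNIV) X MX"
    and PI0: "cond_indep M Y0 borel (\<lambda>\<omega>. (S1 \<omega>, S0 \<omega>)) (count_space UNIV) X MX"
    and e_ss: "is_cond_prob_fun M X MX {\<omega>. (S1 \<omega>, S0 \<omega>) = (True, True)} e_ss"
    and e_ssbar: "is_cond_prob_fun M X MX {\<omega>. (S1 \<omega>, S0 \<omega>) = (True, False)} e_ssbar"
    and e_sbars: "is_cond_prob_fun M X MX {\<omega>. (S1 \<omega>, S0 \<omega>) = (False, True)} e_sbars"
    and e_sbarsbar: "is_cond_prob_fun M X MX {\<omega>. (S1 \<omega>, S0 \<omega>) = (False, False)} e_sbarsbar"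
    and den1_pos: "\<forall>x\<in>space MX. e_ssbar x + e_ss x > 0"
    and den0_pos: "\<forall>x\<in>space MX. e_ssbar x + e_sbarsbar x > 0"
    and E1_pos: "measure M {\<omega>\<in>space M. Z \<omega> \<and> (if Z \<omega> then S1 \<omega> else S0 \<omega>)} > 0"
    and E0_pos: "measure M {\<omega>\<in>space M. \<not> Z \<omega> \<and> \<not> (if Z \<omega> then S1 \<omega> else S0 \<omega>)} > 0"
  shows
    "(let S = (\<lambda>\<omega>. if Z \<omega> then S1 \<omega> else S0 \<omega>);
          U = (\<lambda>\<omega>. (S1 \<omega>, S0 \<omega>));
          M1 = uniform_measure M {\<omega>\<in>space M. Z \<omega> \<and> S \<omega>};
          M0 = uniform_measure M {\<omega>\<in>space M. \<not> Z \<omega> \<and> \<not> S \<omega>};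
          e1_ssbar = (\<lambda>x. e_ssbar x / (e_ssbar x + e_ss x));
          e1_ss = (\<lambda>x. e_ss x / (e_ssbar x + e_ss x));
          e0_ssbar = (\<lambda>x. e_ssbar x / (e_ssbar x + e_sbarsbar x));
          e0_sbarsbar = (\<lambda>x. e_sbarsbar x / (e_ssbar x + e_sbarsbar x))
      in cond_indep M1 Y1 borel U (count_space UNIV) (\<lambda>\<omega>. e1_ssbar (X \<omega>)) borel
       \<and> cond_indep M1 Y1 borel U (count_space UNIV) (\<lambda>\<omega>. e1_ss (X \<omega>)) borel
       \<and> cond_indep M0 Y0 borel U (count_space UNIV) (\<lambda>\<omega>. e0_ssbar (X \<omega>)) borel
       \<and> cond_indep M0 Y0 borel U (count_space UNIV) (\<lambda>\<omega>. e0_sbarsbar (X \<omega>)) borel)"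
proof -
  interpret prob_space M by (fact P)
  define U where "U \<omega> = (S1 \<omega>, S0 \<omega>)" for \<omega>
  have U_meas: "U \<in> measurable M (count_space UNIV)"
    using S1_meas S0_meas unfolding U_def[abs_def] count_space_bool_pair[symmetric] by measurable
  note indep = indep_rv_outcome_stratum_covariates[OF P randomization, folded U_def]
  have pair: "strata_pair M MX borel X Y U u1 u2 e1 e2"
    if "Y \<in> borel_measurable M" "cond_indep M Y borel U (count_space UNIV) X MX" "u1 \<noteq> u2"
      "is_cond_prob_fun M X MX {\<omega>. U \<omega> = u1} e1" "is_cond_prob_fun M X MX {\<omega>. U \<omega> = u2} e2"
      "\<forall>x\<in>space MX. 0 < e1 x + e2 x" for Y u1 u2 e1 e2
    using that X_meas U_meas by unfold_locales (simp_all add: vimage_def)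
  define E1 where "E1 = {\<omega>\<in>space M. Z \<omega> \<and> (if Z \<omega> then S1 \<omega> else S0 \<omega>)}"
  define E0 where "E0 = {\<omega>\<in>space M. \<not> Z \<omega> \<and> \<not> (if Z \<omega> then S1 \<omega> else S0 \<omega>)}"
  have E1_strata: "E1 = Z -` {True} \<inter> U -` {(True, False), (True, True)} \<inter> space M"
    and E0_strata: "E0 = Z -` {False} \<inter> U -` {(True, False), (False, False)} \<inter> space M"
    by (auto simp: E1_def E0_def U_def)
  have den1': "\<forall>x\<in>space MX. 0 < e_ss x + e_ssbar x" and den0': "\<forall>x\<in>space MX. 0 < e_sbarsbar x + e_ssbar x"
    using den1_pos den0_pos by (simp_all add: add.commute)
  note ratio = strata_pair.cond_indep_given_score_ratio
  have "cond_indep (uniform_measure M E1) Y1 borel U (count_space UNIV)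
      (\<lambda>\<omega>. e_ssbar (X \<omega>) / (e_ssbar (X \<omega>) + e_ss (X \<omega>))) borel"
    using E1_pos unfolding E1_def[symmetric]
    by (intro ratio[OF pair[OF Y1_meas PI1[folded U_def] _ e_ssbar[folded U_def] e_ss[folded U_def] den1_pos] indep(1),
          where z="{True}" and E=E1]) (simp_all add: E1_strata insert_commute)
  moreover have "cond_indep (uniform_measure M E1) Y1 borel U (count_space UNIV)
      (\<lambda>\<omega>. e_ss (X \<omega>) / (e_ss (X \<omega>) + e_ssbar (X \<omega>))) borel"
    using E1_pos unfolding E1_def[symmetric]
    by (intro ratio[OF pair[OF Y1_meas PI1[folded U_def] _ e_ss[folded U_def] e_ssbar[folded U_def] den1'] indep(1),
          where z="{True}" and E=E1]) (simp_all add: E1_strata insert_commute)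
  moreover have "cond_indep (uniform_measure M E0) Y0 borel U (count_space UNIV)
      (\<lambda>\<omega>. e_ssbar (X \<omega>) / (e_ssbar (X \<omega>) + e_sbarsbar (X \<omega>))) borel"
    using E0_pos unfolding E0_def[symmetric]
    by (intro ratio[OF pair[OF Y0_meas PI0[folded U_def] _ e_ssbar[folded U_def] e_sbarsbar[folded U_def] den0_pos] indep(2),
          where z="{False}" and E=E0]) (simp_all add: E0_strata insert_commute)
  moreover have "cond_indep (uniform_measure M E0) Y0 borel U (count_space UNIV)
      (\<lambda>\<omega>. e_sbarsbar (X \<omega>) / (e_sbarsbar (X \<omega>) + e_ssbar (X \<omega>))) borel"
    using E0_pos unfolding E0_def[symmetric]
    by (intro ratio[OF pair[OF Y0_meas PI0[folded U_def] _ e_sbarsbar[folded U_def] e_ssbar[folded U_def] den0'] indep(2),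
          where z="{False}" and E=E0]) (simp_all add: E0_strata insert_commute)
  ultimately show ?thesis
    unfolding Let_def U_def[symmetric] E1_def[symmetric] E0_def[symmetric] by (simp add: add.commute)
qed

end
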